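(* Let $I,S:\mathbb{R}\to\mathbb{R}$ be $2\pi$-periodic Lipschitz functions with $I\ge0$ and $\min_{\theta\in[-\pi,\pi]}I(\theta)S(\theta)<0<\max_{\theta\in[-\pi,\pi]}I(\theta)S(\theta)$. Let $(\theta_i(t))$ solve $\dot\theta_i=\omega_i+\frac{\kappa}{N}\sum_{j=1}^NI(\theta_j)S(\theta_i)$, $\theta_i(0)=\theta_i^0$. Fix $\mathcal B\subset\{1,\dots,N\}$ and let $\|\Omega_{\mathcal B}\|_\infty=\max_{i\in\mathcal B}|\omega_i|$. If \[ \kappa>\frac{N\|\Omega_{\mathcal B}\|_\infty}{\min\{-\min IS,\max IS\}}, \] then $\sup_{t\ge0}\theta_i(t)-\inf_{t\ge0}\theta_i(t)<2\pi$ for all $i\in\mathcal B$. *)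

theory Defs
  imports "HOL-Analysis.Analysis"
begin

end

theory Submission
  imports Defs
begin

text \<open>
  Let \<open>I u * S u\<close> and \<open>I v * S v\<close> be the maximum and the minimum of \<open>I * S\<close>.
  Whenever \<open>\<theta>\<^sub>i\<close> lies on a level \<open>u + 2\<pi>k\<close>, its velocity is at least
  \<open>\<omega>\<^sub>i + \<kappa>/N * I u * S u > 0\<close>, because \<open>S u > 0\<close> and \<open>\<Sum>\<^sub>j I \<theta>\<^sub>j \<ge> I \<theta>\<^sub>i = I u\<close>;
  symmetrically its velocity is negative on the levels \<open>v + 2\<pi>k\<close>. So \<open>\<theta>\<^sub>i\<close> never
  crosses the levels \<open>u + 2\<pi>k\<close> downwards nor the levels \<open>v + 2\<pi>k\<close> upwards. Taking the
  level \<open>a\<close> of the first family just below \<open>\<theta>\<^sub>i(0)\<close> and the level \<open>b\<close> of the second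
  family just above \<open>a\<close>, the phase is confined to \<open>[a, b + 2\<pi>]\<close>, and a case distinction
  on whether it ever reaches \<open>b\<close> or \<open>a + 2\<pi>\<close> (using compactness of the initial time
  segment) shrinks this to a window of length less than \<open>2\<pi>\<close>.
\<close>

lemma continuous_attains_SUP:
  fixes f :: "'a::topological_space \<Rightarrow> 'b::{conditionally_complete_linorder, linorder_topology}"
  assumes "compact K" "K \<noteq> {}" "continuous_on K f"
  shows "\<exists>x\<in>K. f x = (SUP y\<in>K. f y)"
proof -
  obtain x where "x \<in> K" "\<forall>y\<in>K. f y \<le> f x"
    using continuous_attains_sup[OF assms] by blast
  then have "(SUP y\<in>K. f y) = f x"
    by (intro cSup_eq_maximum) auto
  with \<open>x \<in> K\<close> show ?thesis
    by auto
qed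

lemma continuous_attains_INF:
  fixes f :: "'a::topological_space \<Rightarrow> 'b::{conditionally_complete_linorder, linorder_topology}"
  assumes "compact K" "K \<noteq> {}" "continuous_on K f"
  shows "\<exists>x\<in>K. f x = (INF y\<in>K. f y)"
proof -
  obtain x where "x \<in> K" "\<forall>y\<in>K. f x \<le> f y"
    using continuous_attains_inf[OF assms] by blast
  then have "(INF y\<in>K. f y) = f x"
    by (intro cInf_eq_minimum) auto
  with \<open>x \<in> K\<close> show ?thesis
    by auto
qed

lemma SUP_minus_INF_less_of_bounds:
  fixes f :: "'a \<Rightarrow> real"
  assumes "A \<noteq> {}" "\<forall>x\<in>A. lo \<le> f x \<and> f x \<le> hi" "hi - lo < p"
  shows "bdd_above (f ` A) \<and> bdd_below (f ` A) \<and> (SUP x\<in>A. f x) - (INF x\<in>A. f x) < p"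
proof -
  have "(SUP x\<in>A. f x) \<le> hi" "lo \<le> (INF x\<in>A. f x)"
    using assms(1,2) by (auto intro: cSUP_least cINF_greatest)
  then show ?thesis
    using assms(2,3) by (auto intro: bdd_aboveI2 bdd_belowI2)
qed

lemma stays_above_level:
  fixes f f' :: "real \<Rightarrow> real"
  assumes deriv: "\<And>t. t \<ge> 0 \<Longrightarrow> (f has_real_derivative f' t) (at t within {0..})"
    and up: "\<And>t. t \<ge> 0 \<Longrightarrow> f t = c \<Longrightarrow> f' t > 0"
    and "0 \<le> t0" "c \<le> f t0" "t0 \<le> t1"
  shows "c \<le> f t1"
proof (rule ccontr)
  assume "\<not> c \<le> f t1"
  then have below: "f t1 < c" by simp
  have "continuous_on {0..} f"
    by (rule DERIV_continuous_on) (use deriv in auto)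
  then have cont: "continuous_on {x..t1} f" if "x \<ge> t0" for x
    by (rule continuous_on_subset) (use that \<open>0 \<le> t0\<close> in auto)
  \<comment> \<open>After the last time \<open>s\<close> at which \<open>f = c\<close>, \<open>f\<close> first rises above \<open>c\<close> and must
    then cross \<open>c\<close> once more to reach \<open>f t1 < c\<close>.\<close>
  define K where "K = {x \<in> {t0..t1}. f x = c}"
  have "closed K"
    unfolding K_def using cont[of t0] by (rule continuous_closed_preimage_constant) simp_all
  then have "compact K"
    by (auto simp: compact_eq_bounded_closed K_def intro: bounded_subset[of "{t0..t1}"])
  moreover have "K \<noteq> {}"
    using IVT2'[of f t1 c t0] cont assms(4,5) below by (auto simp: K_def)
  ultimately obtain s where "s \<in> K" and last: "\<And>y. y \<in> K \<Longrightarrow> y \<le> s"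
    using compact_attains_sup by metis
  then have s: "t0 \<le> s" "s < t1" "f s = c"
    using below by (auto simp: K_def less_le)
  moreover have "s \<ge> 0"
    using s \<open>0 \<le> t0\<close> by simp
  ultimately obtain d where "d > 0" and increasing: "\<And>h. 0 < h \<Longrightarrow> h < d \<Longrightarrow> f s < f (s + h)"
    using has_real_derivative_pos_inc_right[OF deriv up] by (metis atLeast_iff add_nonneg_nonneg less_imp_le)
  define h where "h = min (d/2) ((t1 - s)/2)"
  have h: "0 < h" "h < d" "s + h < t1"
    using \<open>d > 0\<close> s by (auto simp: h_def min_def field_simps)
  then have "f t1 \<le> c" "c \<le> f (s + h)"
    using below increasing[of h] s by auto
  then obtain w where "s + h \<le> w" "w \<le> t1" "f w = c"
    using IVT2'[of f t1 c "s + h"] cont[of "s + h"] h s by auto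
  then have "w \<in> K" "s < w"
    using h s by (auto simp: K_def)
  then show False
    using last by fastforce
qed

lemma stays_below_level:
  fixes f f' :: "real \<Rightarrow> real"
  assumes deriv: "\<And>t. t \<ge> 0 \<Longrightarrow> (f has_real_derivative f' t) (at t within {0..})"
    and down: "\<And>t. t \<ge> 0 \<Longrightarrow> f t = c \<Longrightarrow> f' t < 0"
    and "0 \<le> t0" "f t0 \<le> c" "t0 \<le> t1"
  shows "f t1 \<le> c"
  using stays_above_level[of "\<lambda>t. - f t" "\<lambda>t. - f' t" "- c" t0 t1] assms
  by (auto intro: DERIV_minus)

lemma uniformly_below_level_after_drop:
  fixes f f' :: "real \<Rightarrow> real"
  assumes deriv: "\<And>t. t \<ge> 0 \<Longrightarrow> (f has_real_derivative f' t) (at t within {0..})"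
    and up: "\<And>t. t \<ge> 0 \<Longrightarrow> f t = c \<Longrightarrow> f' t > 0"
    and down: "\<And>t. t \<ge> 0 \<Longrightarrow> f t = d \<Longrightarrow> f' t < 0"
    and "d < c" "0 \<le> t1" "f t1 \<le> d"
  shows "\<exists>h < c. \<forall>t \<ge> 0. f t \<le> h"
proof -
  have before: "f s < c" if "s \<in> {0..t1}" for s
  proof (rule ccontr)
    assume "\<not> f s < c"
    then have "c \<le> f t1"
      using stays_above_level[of f f' c s t1] deriv up that by auto
    then show False
      using assms(4,6) by simp
  qed
  have "continuous_on {0..} f"
    by (rule DERIV_continuous_on) (use deriv in auto)
  then have "continuous_on {0..t1} f"
    by (rule continuous_on_subset) auto
  then obtain p where "p \<in> {0..t1}" and p_max: "\<And>s. s \<in> {0..t1} \<Longrightarrow> f s \<le> f p"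
    using continuous_attains_sup[of "{0..t1}" f] \<open>0 \<le> t1\<close> by auto
  have after: "f t \<le> d" if "t1 \<le> t" for t
    using stays_below_level[OF deriv down \<open>0 \<le> t1\<close> \<open>f t1 \<le> d\<close> that] .
  have "f t \<le> max (f p) d" if "t \<ge> 0" for t
    using p_max[of t] after[of t] that by (cases "t \<le> t1") auto
  moreover have "max (f p) d < c"
    using before[OF \<open>p \<in> {0..t1}\<close>] \<open>d < c\<close> by simp
  ultimately show ?thesis
    by blast
qed

lemma trapped_in_window:
  fixes f f' :: "real \<Rightarrow> real"
  assumes deriv: "\<And>t. t \<ge> 0 \<Longrightarrow> (f has_real_derivative f' t) (at t within {0..})"
    and up: "\<And>t. t \<ge> 0 \<Longrightarrow> f t = a \<or> f t = a + p \<Longrightarrow> f' t > 0"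
    and down: "\<And>t. t \<ge> 0 \<Longrightarrow> f t = b \<or> f t = b + p \<Longrightarrow> f' t < 0"
    and window: "a < b" "b < a + p"
    and start: "a \<le> f 0" "f 0 < a + p"
  shows "\<exists>lo hi. hi - lo < p \<and> (\<forall>t \<ge> 0. lo \<le> f t \<and> f t \<le> hi)"
proof -
  have above_a: "a \<le> f t" if "t \<ge> 0" for t
    using stays_above_level[of f f' a 0 t] deriv up start(1) that by auto
  have below_b_p: "f t \<le> b + p" if "t \<ge> 0" for t
    using stays_below_level[of f f' "b + p" 0 t] deriv down window(1) start(2) that by auto
  consider (dropped) t1 where "t1 \<ge> 0" "f t1 \<le> b"
    | (risen) t2 where "t2 \<ge> 0" "a + p \<le> f t2"
    | (between) "\<forall>t \<ge> 0. b < f t \<and> f t < a + p"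
    by force
  then show ?thesis
  proof cases
    case dropped
    then obtain h where "h < a + p" "\<forall>t \<ge> 0. f t \<le> h"
      using uniformly_below_level_after_drop[OF deriv up down] window(2) by blast
    then show ?thesis
      using above_a by (intro exI[of _ a] exI[of _ h]) auto
  next
    case risen
    have "((\<lambda>t. - f t) has_real_derivative - f' t) (at t within {0..})" if "t \<ge> 0" for t
      using deriv[OF that] by (rule DERIV_minus)
    then obtain h where "h < - b" "\<forall>t \<ge> 0. - f t \<le> h"
      using uniformly_below_level_after_drop[of "\<lambda>t. - f t" "\<lambda>t. - f' t" "- b" "- (a + p)" t2]
        up down risen window(2) by fastforce
    then show ?thesis
      using below_b_p by (intro exI[of _ "- h"] exI[of _ "b + p"]) auto
  next
    case between
    then show ?thesis
      using window(1) by (intro exI[of _ b] exI[of _ "a + p"]) auto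
  qed
qed

lemma trapped_between_periodic_barriers:
  fixes f f' :: "real \<Rightarrow> real"
  assumes deriv: "\<And>t. t \<ge> 0 \<Longrightarrow> (f has_real_derivative f' t) (at t within {0..})"
    and up: "\<And>t k. t \<ge> 0 \<Longrightarrow> f t = u + of_int k * p \<Longrightarrow> f' t > 0"
    and down: "\<And>t k. t \<ge> 0 \<Longrightarrow> f t = v + of_int k * p \<Longrightarrow> f' t < 0"
    and distinct: "\<And>k. v \<noteq> u + of_int k * p"
    and "p > 0"
  shows "\<exists>lo hi. hi - lo < p \<and> (\<forall>t \<ge> 0. lo \<le> f t \<and> f t \<le> hi)"
proof -
  define ka where "ka = \<lfloor>(f 0 - u) / p\<rfloor>"
  define a where "a = u + of_int ka * p"
  define kb where "kb = \<lceil>(a - v) / p\<rceil>"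
  define b where "b = v + of_int kb * p"
  have "a \<le> f 0" "f 0 < a + p"
    using floor_divide_lower[OF \<open>p > 0\<close>, of "f 0 - u"]
      floor_divide_upper[OF \<open>p > 0\<close>, of "f 0 - u"]
    by (simp_all add: a_def ka_def algebra_simps)
  moreover have "a \<le> b" "b < a + p"
    using ceiling_divide_upper[OF \<open>p > 0\<close>, of "a - v"]
      ceiling_divide_lower[OF \<open>p > 0\<close>, of "a - v"]
    by (simp_all add: a_def b_def kb_def algebra_simps)
  moreover have "a \<noteq> b"
    using distinct[of "ka - kb"] by (auto simp: a_def b_def algebra_simps)
  moreover have "f' t > 0" if "t \<ge> 0" "f t = a \<or> f t = a + p" for t
    using that up[of t ka] up[of t "ka + 1"] by (auto simp: a_def algebra_simps)
  moreover have "f' t < 0" if "t \<ge> 0" "f t = b \<or> f t = b + p" for t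
    using that down[of t kb] down[of t "kb + 1"] by (auto simp: b_def algebra_simps)
  ultimately show ?thesis
    using trapped_in_window[OF deriv, of a p b] by auto
qed

lemma oscillator_trapped:
  fixes I S :: "real \<Rightarrow> real" and \<theta> :: "'i \<Rightarrow> real \<Rightarrow> real"
  assumes I_per: "periodic_fun_simple I p" and S_per: "periodic_fun_simple S p" and "p > 0"
    and I_nonneg: "\<And>x. I x \<ge> 0"
    and "finite A" "i \<in> A"
    and ode: "\<And>t. t \<ge> 0 \<Longrightarrow>
      (\<theta> i has_real_derivative \<omega> + c * (\<Sum>j\<in>A. I (\<theta> j t) * S (\<theta> i t))) (at t within {0..})"
    and up: "c * (I u * S u) > \<bar>\<omega>\<bar>"
    and down: "c * (I v * S v) < - \<bar>\<omega>\<bar>"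
  shows "\<exists>lo hi. hi - lo < p \<and> (\<forall>t \<ge> 0. lo \<le> \<theta> i t \<and> \<theta> i t \<le> hi)"
proof -
  interpret I: periodic_fun_simple I p by (fact I_per)
  interpret S: periodic_fun_simple S p by (fact S_per)
  have coupling: "c * (\<Sum>j\<in>A. I (\<theta> j t) * S (\<theta> i t)) = c * S x * (\<Sum>j\<in>A. I (\<theta> j t))"
    if "\<theta> i t = x + of_int k * p" for t x k
    using S.plus_of_int that by (simp add: sum_distrib_left mult_ac)
  have own_weight: "I x \<le> (\<Sum>j\<in>A. I (\<theta> j t))"
    if "\<theta> i t = x + of_int k * p" for t x k
    using member_le_sum[of i A "\<lambda>j. I (\<theta> j t)"] I_nonneg \<open>finite A\<close> \<open>i \<in> A\<close>
      I.plus_of_int that by force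
  have "0 < (c * S u) * I u" "0 < (- (c * S v)) * I v"
    using up down by (simp_all add: mult_ac)
  then have "c * S u > 0" "c * S v < 0"
    using I_nonneg[of u] I_nonneg[of v] by (auto simp only: zero_less_mult_iff neg_0_less_iff_less)
  have "\<omega> + c * (\<Sum>j\<in>A. I (\<theta> j t) * S (\<theta> i t)) > 0"
    if "\<theta> i t = u + of_int k * p" for t k
  proof -
    have "c * S u * I u \<le> c * S u * (\<Sum>j\<in>A. I (\<theta> j t))"
      using own_weight[OF that] \<open>c * S u > 0\<close> by (intro mult_left_mono) auto
    moreover have "c * S u * I u = c * (I u * S u)"
      by (simp add: mult_ac)
    ultimately show ?thesis
      unfolding coupling[OF that] using up abs_ge_minus_self[of \<omega>] by linarith
  qed
  moreover have "\<omega> + c * (\<Sum>j\<in>A. I (\<theta> j t) * S (\<theta> i t)) < 0"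
    if "\<theta> i t = v + of_int k * p" for t k
  proof -
    have "c * S v * (\<Sum>j\<in>A. I (\<theta> j t)) \<le> c * S v * I v"
      using own_weight[OF that] \<open>c * S v < 0\<close> by (intro mult_left_mono_neg) auto
    moreover have "c * S v * I v = c * (I v * S v)"
      by (simp add: mult_ac)
    ultimately show ?thesis
      unfolding coupling[OF that] using down abs_ge_self[of \<omega>] by linarith
  qed
  moreover have "v \<noteq> u + of_int k * p" for k
    using up down I.plus_of_int[of u k] S.plus_of_int[of u k] by auto
  ultimately show ?thesis
    using trapped_between_periodic_barriers[OF ode] \<open>p > 0\<close> by blast
qed

lemma strong_coupling_dominates_frequency:
  fixes \<kappa> n W m M w :: real
  assumes "\<kappa> > n * W / min (- m) M" "m < 0" "0 < M" "n > 0" "\<bar>w\<bar> \<le> W"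
  shows "\<kappa> / n * M > \<bar>w\<bar>" "\<kappa> / n * m < - \<bar>w\<bar>"
proof -
  define \<mu> where "\<mu> = min (- m) M"
  have "\<mu> > 0"
    using assms(2,3) by (simp add: \<mu>_def)
  have "n * \<bar>w\<bar> \<le> n * W"
    using assms(4,5) by simp
  then have "\<kappa> * \<mu> > n * \<bar>w\<bar>"
    using assms(1) \<open>\<mu> > 0\<close> by (simp add: \<mu>_def pos_divide_less_eq)
  moreover have "n * \<bar>w\<bar> \<ge> 0"
    using assms(4) by simp
  ultimately have "0 < \<kappa> * \<mu>"
    by linarith
  then have "\<kappa> > 0"
    using \<open>\<mu> > 0\<close> by (simp add: zero_less_mult_iff)
  then have "\<kappa> * \<mu> \<le> \<kappa> * M" "\<kappa> * \<mu> \<le> \<kappa> * (- m)"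
    by (intro mult_left_mono; simp add: \<mu>_def)+
  with \<open>\<kappa> * \<mu> > n * \<bar>w\<bar>\<close> have "\<bar>w\<bar> * n < \<kappa> * M" "\<kappa> * m < - \<bar>w\<bar> * n"
    by (simp_all add: mult.commute)
  then show "\<kappa> / n * M > \<bar>w\<bar>" "\<kappa> / n * m < - \<bar>w\<bar>"
    using assms(4) by (simp_all add: pos_less_divide_eq pos_divide_less_eq)
qed

theorem proposition4p1:
  fixes I S :: "real \<Rightarrow> real"
    and N :: nat
    and \<omega> \<theta>0 :: "nat \<Rightarrow> real"
    and \<kappa> :: real
    and \<theta> :: "nat \<Rightarrow> real \<Rightarrow> real"
    and B :: "nat set"
  assumes I_per: "\<forall>x. I (x + 2 * pi) = I x"
    and S_per: "\<forall>x. S (x + 2 * pi) = S x"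
    and I_lip: "\<exists>L. L-lipschitz_on UNIV I"
    and S_lip: "\<exists>L. L-lipschitz_on UNIV S"
    and I_nonneg: "\<forall>x. I x \<ge> 0"
    and IS_min: "(INF x\<in>{-pi..pi}. I x * S x) < 0"
    and IS_max: "0 < (SUP x\<in>{-pi..pi}. I x * S x)"
    and ode: "\<forall>i\<in>{1..N}. \<forall>t\<ge>0.
        ((\<theta> i) has_real_derivative
           (\<omega> i + \<kappa> / real N * (\<Sum>j=1..N. I (\<theta> j t) * S (\<theta> i t)))) (at t within {0..})"
    and init: "\<forall>i\<in>{1..N}. \<theta> i 0 = \<theta>0 i"
    and B_sub: "B \<subseteq> {1..N}"
    and coupling: "\<kappa> > real N * Max ((\<lambda>i. \<bar>\<omega> i\<bar>) ` B) /
        min (- (INF x\<in>{-pi..pi}. I x * S x)) (SUP x\<in>{-pi..pi}. I x * S x)"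
  shows "\<forall>i\<in>B. bdd_above (\<theta> i ` {0..}) \<and> bdd_below (\<theta> i ` {0..}) \<and>
           (SUP t\<in>{0..}. \<theta> i t) - (INF t\<in>{0..}. \<theta> i t) < 2 * pi"
proof -
  obtain LI LS where "LI-lipschitz_on UNIV I" "LS-lipschitz_on UNIV S"
    using I_lip S_lip by blast
  then have "continuous_on UNIV I" "continuous_on UNIV S"
    by (simp_all add: lipschitz_on_continuous_on)
  then have IS_cont: "continuous_on {-pi..pi} (\<lambda>x. I x * S x)"
    by (intro continuous_on_mult) (auto elim: continuous_on_subset)
  have "{-pi..pi} \<noteq> {}"
    by simp
  then obtain u v where u: "I u * S u = (SUP x\<in>{-pi..pi}. I x * S x)"
    and v: "I v * S v = (INF x\<in>{-pi..pi}. I x * S x)"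
    using continuous_attains_SUP[OF compact_Icc _ IS_cont] continuous_attains_INF[OF compact_Icc _ IS_cont]
    by blast
  have per: "periodic_fun_simple I (2 * pi)" "periodic_fun_simple S (2 * pi)"
    using I_per S_per by (simp_all add: periodic_fun_simple_def)
  show ?thesis
  proof
    fix i assume "i \<in> B"
    then have "i \<in> {1..N}" "real N > 0" "\<bar>\<omega> i\<bar> \<le> Max ((\<lambda>i. \<bar>\<omega> i\<bar>) ` B)"
      using B_sub finite_subset[OF B_sub] by auto
    then have up: "\<kappa> / real N * (I u * S u) > \<bar>\<omega> i\<bar>"
      and down: "\<kappa> / real N * (I v * S v) < - \<bar>\<omega> i\<bar>"
      using strong_coupling_dominates_frequency[OF coupling] IS_min IS_max by (simp_all add: u v)
    have phase_ode: "((\<theta> i) has_real_derivative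
        (\<omega> i + \<kappa> / real N * (\<Sum>j\<in>{1..N}. I (\<theta> j t) * S (\<theta> i t)))) (at t within {0..})"
      if "t \<ge> 0" for t
      using ode \<open>i \<in> {1..N}\<close> that by blast
    have "2 * pi > 0"
      by simp
    obtain lo hi where "hi - lo < 2 * pi" "\<forall>t \<ge> 0. lo \<le> \<theta> i t \<and> \<theta> i t \<le> hi"
      using oscillator_trapped[OF per \<open>2 * pi > 0\<close> I_nonneg[rule_format] finite_atLeastAtMost
          \<open>i \<in> {1..N}\<close> phase_ode up down] by blast
    then show "bdd_above (\<theta> i ` {0..}) \<and> bdd_below (\<theta> i ` {0..}) \<and>
        (SUP t\<in>{0..}. \<theta> i t) - (INF t\<in>{0..}. \<theta> i t) < 2 * pi"
      by (intro SUP_minus_INF_less_of_bounds) auto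
  qed
qed

end
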